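(* Consider the following algorithm, given a positive integer $x$: factor all $n \le x$ using a sieve (an array recording a prime factor of each $n \le x$, from which the factorization is recovered by repeated division and lookup); then for each $n \le x$, compute $\ell = \prod_{p \mid n} p'$ over the distinct primes $p$ dividing $n$, mark $n$ with $0$ if $\gcd(\ell, n') \ne 1$, mark $n$ with $0$ if $n$ is odd and all its prime factors are $\equiv 1 \pmod 4$, and otherwise mark $n$ with $1$. Then this algorithm stores at most $O(x \log\log x)$ integers of size at most $x$ and runs using $O(x \cdot M(\log x) \log\log x)$ bit operations.
   Context: For a positive integer $m$, $m'$ denotes the odd part of $m-1$. $M(k)$ denotes the number of bit operations needed to multiply two $k$-bit integers (assumed to be at least linear in $k$), and a gcd of two $k$-bit integers is computed in $O(M(k)\log k)$ bit operations. $\log$ is the natural logarithm. *)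

theory Defs
  imports Complex_Main "HOL-Computational_Algebra.Primes"
begin

(* Odd part of m (with the convention odd_part 0 = 0), and n' = odd part of n - 1. *)
definition odd_part :: "nat \<Rightarrow> nat" where
  "odd_part m = m div 2 ^ multiplicity (2::nat) m"

definition dash :: "nat \<Rightarrow> nat" where
  "dash n = odd_part (n - 1)"

definition ell :: "nat \<Rightarrow> nat" where
  "ell n = (\<Prod>p\<in>prime_factors n. dash p)"

definition mark :: "nat \<Rightarrow> nat" where
  "mark n = (if gcd (ell n) (dash n) \<noteq> 1 then 0
             else if odd n \<and> (\<forall>p\<in>prime_factors n. p mod 4 = 1) then 0 else 1)"

definition bitlen :: "nat \<Rightarrow> nat" where
  "bitlen n = (LEAST k. n < 2 ^ k)"

(* Primitive operations on integers of k bits. *)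
datatype prim =
    Arith nat   (* addition/subtraction/comparison/shift/bit scan/array read or write, k-bit *)
  | Mult nat
  | Divi nat
  | Gcdop nat

fun prim_cost :: "(nat \<Rightarrow> real) \<Rightarrow> (nat \<Rightarrow> real) \<Rightarrow> (nat \<Rightarrow> real) \<Rightarrow> (nat \<Rightarrow> real)
                    \<Rightarrow> prim \<Rightarrow> real" where
  "prim_cost M A D G (Arith k) = A k"
| "prim_cost M A D G (Mult k) = M k"
| "prim_cost M A D G (Divi k) = D k"
| "prim_cost M A D G (Gcdop k) = G k"

definition trace_cost :: "(nat \<Rightarrow> real) \<Rightarrow> (nat \<Rightarrow> real) \<Rightarrow> (nat \<Rightarrow> real) \<Rightarrow> (nat \<Rightarrow> real)
                    \<Rightarrow> prim list \<Rightarrow> real" where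
  "trace_cost M A D G tr = sum_list (map (prim_cost M A D G) tr)"

(* Sieve of Eratosthenes up to x: initialise an array of x entries; for each p = 2..x,
   test whether the entry is unmarked (i.e. p prime); if so, walk through the multiples
   of p up to x (one addition and one array write each), recording p as a prime factor. *)
definition sieve_trace :: "nat \<Rightarrow> prim list" where
  "sieve_trace x = (let k = bitlen x in
     replicate x (Arith k) @
     concat (map (\<lambda>p. Arith k #
        (if prime p then concat (map (\<lambda>j. [Arith k, Arith k]) [1..<x div p + 1]) else []))
        [2..<x+1]))"

(* Recovering the factorisation of n from the sieve array: one lookup and one division
   per prime factor counted with multiplicity. *)
definition factor_trace :: "nat \<Rightarrow> nat \<Rightarrow> prim list" where
  "factor_trace x n = (let k = bitlen x in
     concat (replicate (size (prime_factorization n)) [Arith k, Divi k]))"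

(* Computing the mark of n: compute n' (bit operations); for each distinct prime p | n,
   compute p' (bit operations), update l := l * p' mod n' (one multiplication, one division),
   test p mod 4 (bit operation); then one gcd(l, n') and one write of the mark. *)
definition mark_trace :: "nat \<Rightarrow> nat \<Rightarrow> prim list" where
  "mark_trace x n = (let k = bitlen x in
     Arith k #
     concat (map (\<lambda>p. [Arith k, Mult k, Divi k, Arith k]) (sorted_list_of_set (prime_factors n)))
     @ [Gcdop k, Arith k])"

definition alg_trace :: "nat \<Rightarrow> prim list" where
  "alg_trace x = sieve_trace x @ concat (map (\<lambda>n. factor_trace x n @ mark_trace x n) [1..<x+1])"

(* A prime factor of n recorded by the sieve (n itself for n \<le> 1). *)
definition spf :: "nat \<Rightarrow> nat" where
  "spf n = (if n \<le> 1 then n else Min (prime_factors n))"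

(* The integers stored by the algorithm: the sieve array, the factorisations
   (prime, exponent) of all n \<le> x, and the marks. *)
definition stored_ints :: "nat \<Rightarrow> nat list" where
  "stored_ints x =
     map spf [1..<x+1]
     @ concat (map (\<lambda>n. concat (map (\<lambda>p. [p, multiplicity p n]) (sorted_list_of_set (prime_factors n))))
                [1..<x+1])
     @ map mark [1..<x+1]"

end

theory Submission
  imports Defs "HOL-Analysis.Analysis"
begin

text \<open>Storage and running time are governed by the sums \<open>\<Sum>\<^bsub>n\<le>x\<^esub> \<omega>(n) = \<Sum>\<^bsub>p\<le>x\<^esub> \<lfloor>x/p\<rfloor>\<close>
  (entries of the factorisations, multiplications in the loop over \<open>p | n\<close>, steps of the sieve)
  and \<open>\<Sum>\<^bsub>n\<le>x\<^esub> \<Omega>(n)\<close> (divisions while recovering the factorisations), both at most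
  \<open>2x \<Sum>\<^bsub>p\<le>x\<^esub> 1/p\<close>. Chebyshev's identity \<open>\<Sum>\<^bsub>p\<le>n\<^esub> \<lfloor>n/p\<rfloor> ln p = \<Sum>\<^bsub>m\<le>n\<^esub> ln rad(m) \<le> n ln n\<close>
  gives \<open>\<Sum>\<^bsub>p\<le>n\<^esub> ln p / p \<le> 2 ln n\<close>, and Abel summation turns this into the Mertens-type bound
  \<open>\<Sum>\<^bsub>p\<le>x\<^esub> 1/p \<le> 2 ln ln x + O(1)\<close>. Every primitive operation acts on integers of
  \<open>bitlen x = O(log x)\<close> bits and costs \<open>O(M(bitlen x))\<close>, except the single gcd per \<open>n\<close>, which
  costs \<open>O(M(bitlen x) log log x)\<close>.\<close>

lemma card_multiples_atLeastAtMost: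
  assumes "d > (0::nat)"
  shows "card {m\<in>{1..n}. d dvd m} = n div d"
proof -
  have "{m\<in>{1..n}. d dvd m} = (\<lambda>i. d * i) ` {1..n div d}"
  proof (intro equalityI subsetI)
    fix m assume "m \<in> {m\<in>{1..n}. d dvd m}"
    then obtain i where m: "m = d * i" "1 \<le> m" "m \<le> n" by auto
    then have "1 \<le> i" by (cases i) auto
    moreover have "i \<le> n div d"
      using div_le_mono[OF \<open>m \<le> n\<close>, of d] m assms by simp
    ultimately show "m \<in> (\<lambda>i. d * i) ` {1..n div d}" using m by auto
  next
    fix m assume "m \<in> (\<lambda>i. d * i) ` {1..n div d}"
    then obtain i where "i \<in> {1..n div d}" and "m = d * i" by blast
    then have i: "m = d * i" "1 \<le> i" "i \<le> n div d" by auto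
    have "d * i \<le> d * (n div d)" using i by simp
    also have "\<dots> \<le> n" by simp
    finally have "d * i \<le> n" .
    then show "m \<in> {m\<in>{1..n}. d dvd m}" using i assms by auto
  qed
  moreover have "inj_on (\<lambda>i. d * i) {1..n div d}" using assms by (auto simp: inj_on_def)
  ultimately show ?thesis by (simp add: card_image)
qed

lemma prime_factors_eq_primes_le_dvd:
  assumes "(n::nat) \<in> {1..x}"
  shows "prime_factors n = {p. prime p \<and> p \<le> x \<and> p dvd n}"
proof -
  have "p \<le> x" if "p dvd n" for p
    using dvd_imp_le[OF that] assms by auto
  moreover have "prime_factors n = {p. prime p \<and> p dvd n}"
    using assms by (intro prime_factors_dvd) auto
  ultimately show ?thesis by auto
qed

text \<open>Double counting: a prime \<open>p \<le> x\<close> contributes to \<open>x div p\<close> of the \<open>n \<le> x\<close>.\<close>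

lemma sum_over_prime_factors_swap:
  "(\<Sum>n=1..x. \<Sum>p\<in>prime_factors n. f p) = (\<Sum>p | prime p \<and> p \<le> x. of_nat (x div p) * f p)"
proof -
  have "(\<Sum>n=1..x. \<Sum>p\<in>prime_factors n. f p)
      = (\<Sum>n\<in>{1..x}. \<Sum>p\<in>{p\<in>{..x}. prime p \<and> p dvd n}. f p)"
    by (intro sum.cong refl) (auto simp: prime_factors_eq_primes_le_dvd)
  also have "\<dots> = (\<Sum>p\<in>{..x}. \<Sum>n\<in>{n\<in>{1..x}. prime p \<and> p dvd n}. f p)"
    by (rule sum.swap_restrict) auto
  also have "\<dots> = (\<Sum>p\<in>{..x}. if prime p then of_nat (x div p) * f p else 0)"
    using card_multiples_atLeastAtMost[of _ x] by (intro sum.cong refl) (simp add: prime_gt_0_nat)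
  also have "\<dots> = (\<Sum>p | prime p \<and> p \<le> x. of_nat (x div p) * f p)"
    by (simp add: sum.inter_filter[symmetric] conj_commute)
  finally show ?thesis .
qed

lemma sum_ln_prime_factors_le:
  assumes "m \<noteq> (0::nat)"
  shows "(\<Sum>p\<in>prime_factors m. ln (real p)) \<le> ln (real m)"
proof -
  have pos: "0 < real p" if "p \<in> prime_factors m" for p
    using that prime_gt_0_nat by auto
  have "(\<Prod>p\<in>prime_factors m. p) \<le> (\<Prod>p\<in>prime_factors m. p ^ multiplicity p m)"
  proof (rule prod_mono)
    fix p assume p: "p \<in> prime_factors m"
    then have "multiplicity p m \<ge> 1"
      using assms by (simp add: prime_factors_multiplicity)
    then show "0 \<le> p \<and> p \<le> p ^ multiplicity p m"
      using pos[OF p] by (simp add: self_le_power)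
  qed
  also have "\<dots> = m" using assms by (simp add: prod_prime_factors)
  finally have "(\<Prod>p\<in>prime_factors m. real p) \<le> real m"
    by (simp flip: of_nat_prod)
  then have "ln (\<Prod>p\<in>prime_factors m. real p) \<le> ln (real m)"
    using pos by (intro ln_mono prod_pos) auto
  then show ?thesis using pos by (simp add: ln_prod)
qed

lemma sum_primes_ln_mult_div_le:
  "(\<Sum>p | prime p \<and> p \<le> n. real (n div p) * ln (real p)) \<le> real n * ln (real n)"
proof -
  have "(\<Sum>p | prime p \<and> p \<le> n. real (n div p) * ln (real p))
      = (\<Sum>m=1..n. \<Sum>p\<in>prime_factors m. ln (real p))"
    by (rule sum_over_prime_factors_swap[symmetric])
  also have "\<dots> \<le> (\<Sum>m=1..n. ln (real n))"
    by (intro sum_mono order_trans[OF sum_ln_prime_factors_le]) auto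
  finally show ?thesis by simp
qed

lemma sum_primes_ln_div_le:
  assumes "n \<ge> (1::nat)"
  shows "(\<Sum>p | prime p \<and> p \<le> n. ln (real p) / real p) \<le> 2 * ln (real n)"
proof -
  have "(\<Sum>p | prime p \<and> p \<le> n. ln (real p) / real p) * (real n / 2)
      = (\<Sum>p | prime p \<and> p \<le> n. real n / (2 * real p) * ln (real p))"
    unfolding sum_distrib_right by (intro sum.cong) (auto simp: field_simps)
  also have "\<dots> \<le> (\<Sum>p | prime p \<and> p \<le> n. real (n div p) * ln (real p))"
  proof (rule sum_mono)
    fix p assume p: "p \<in> {p. prime p \<and> p \<le> n}"
    then have "p > 0" by (simp add: prime_gt_0_nat)
    have "n div p \<ge> 1" using p \<open>p > 0\<close> by (simp add: Suc_le_eq div_greater_zero_iff)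
    have "n < p * (n div p) + p"
      using mod_less_divisor[OF \<open>p > 0\<close>, of n] mult_div_mod_eq[of p n] by linarith
    then have "real n < real p * (real (n div p) + 1)"
      by (simp add: algebra_simps flip: of_nat_mult of_nat_add)
    also have "\<dots> \<le> real p * (2 * real (n div p))" using \<open>n div p \<ge> 1\<close> by (intro mult_left_mono) auto
    finally have "real n / (2 * real p) \<le> real (n div p)" using \<open>p > 0\<close> by (simp add: field_simps)
    then show "real n / (2 * real p) * ln (real p) \<le> real (n div p) * ln (real p)"
      using \<open>p > 0\<close> by (intro mult_right_mono) auto
  qed
  also have "\<dots> \<le> real n * ln (real n)" by (rule sum_primes_ln_mult_div_le)
  finally show ?thesis using assms by (simp add: field_simps)
qed

lemma ratio_diff_le_ln_diff:
  fixes a b s :: real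
  assumes "0 < a" "a \<le> b" "0 \<le> s" "s \<le> 2 * a"
  shows "s / a - s / b \<le> 2 * (ln b - ln a)"
proof -
  have "s / a - s / b = s * (b - a) / (a * b)" using assms by (simp add: field_simps)
  also have "\<dots> \<le> 2 * a * (b - a) / (a * b)"
    using assms by (intro divide_right_mono mult_right_mono) auto
  also have "\<dots> = 2 * (1 - a / b)" using assms by (simp add: field_simps)
  also have "\<dots> \<le> 2 * (ln b - ln a)"
    using ln_le_minus_one[of "a / b"] assms by (simp add: ln_div)
  finally show ?thesis .
qed

lemma sum_primes_le_Suc:
  "(\<Sum>p | prime p \<and> p \<le> Suc x. f p) = (\<Sum>p | prime p \<and> p \<le> x. f p) + (if prime (Suc x) then f (Suc x) else 0)"
proof (cases "prime (Suc x)")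
  case True
  then have "{p. prime p \<and> p \<le> Suc x} = insert (Suc x) {p. prime p \<and> p \<le> x}"
    by (auto simp: le_Suc_eq)
  then show ?thesis using True by (simp add: add.commute)
next
  case False
  then have "{p. prime p \<and> p \<le> Suc x} = {p. prime p \<and> p \<le> x}"
    by (auto simp: le_Suc_eq)
  then show ?thesis using False by simp
qed

text \<open>Abel summation of \<open>1/p = (ln p / p) \<cdot> (1 / ln p)\<close> against the weights \<open>ln p / p\<close>; each step
  trades the change of \<open>1 / ln x\<close> for the change of \<open>ln (ln x)\<close>.\<close>

lemma sum_primes_inverse_le_Abel:
  assumes "x \<ge> (2::nat)"
  shows "(\<Sum>p | prime p \<and> p \<le> x. 1 / real p)
    \<le> (\<Sum>p | prime p \<and> p \<le> x. ln (real p) / real p) / ln (real x) + 2 * (ln (ln (real x)) - ln (ln 2))"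
  using assms
proof (induction x rule: nat_induct_at_least)
  case base
  have "{p. prime p \<and> p \<le> (2::nat)} = {2}"
    using prime_ge_2_nat by (auto intro: antisym)
  then show ?case by simp
next
  case (Suc x)
  define S where "S = (\<Sum>p | prime p \<and> p \<le> x. ln (real p) / real p)"
  define d where "d = (if prime (Suc x) then ln (real (Suc x)) / real (Suc x) else 0)"
  have lx: "0 < ln (real x)" "ln (real x) \<le> ln (real (Suc x))" using Suc.hyps by auto
  have S0: "0 \<le> S" unfolding S_def by (intro sum_nonneg) (auto dest: prime_ge_1_nat)
  have S2: "S \<le> 2 * ln (real x)" unfolding S_def using Suc.hyps by (intro sum_primes_ln_div_le) auto
  have step: "S / ln (real x) - S / ln (real (Suc x)) \<le> 2 * (ln (ln (real (Suc x))) - ln (ln (real x)))"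
    by (rule ratio_diff_le_ln_diff) (use lx S0 S2 in auto)
  have "(\<Sum>p | prime p \<and> p \<le> Suc x. 1 / real p) = (\<Sum>p | prime p \<and> p \<le> x. 1 / real p) + d / ln (real (Suc x))"
    unfolding sum_primes_le_Suc d_def using Suc.hyps by auto
  also have "\<dots> \<le> S / ln (real x) + 2 * (ln (ln (real x)) - ln (ln 2)) + d / ln (real (Suc x))"
    using Suc.IH unfolding S_def by simp
  also have "\<dots> \<le> (S + d) / ln (real (Suc x)) + 2 * (ln (ln (real (Suc x))) - ln (ln 2))"
    using step by (simp add: add_divide_distrib)
  also have "S + d = (\<Sum>p | prime p \<and> p \<le> Suc x. ln (real p) / real p)"
    unfolding sum_primes_le_Suc S_def d_def by simp
  finally show ?case .
qed

lemma sum_primes_inverse_le: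
  assumes "x \<ge> (2::nat)"
  shows "(\<Sum>p | prime p \<and> p \<le> x. 1 / real p) \<le> 2 + 2 * ln (ln (real x)) - 2 * ln (ln 2)"
proof -
  have "(\<Sum>p | prime p \<and> p \<le> x. ln (real p) / real p) / ln (real x) \<le> 2"
    using sum_primes_ln_div_le[of x] assms by (simp add: divide_le_eq)
  then show ?thesis using sum_primes_inverse_le_Abel[OF assms] by simp
qed

lemma sum_card_prime_factors:
  "(\<Sum>n=1..x. card (prime_factors n)) = (\<Sum>p | prime p \<and> p \<le> x. x div p)"
  using sum_over_prime_factors_swap[of "\<lambda>_. 1::nat" x] by simp

lemma sum_primes_div_le:
  "(\<Sum>p | prime p \<and> p \<le> x. real (x div p)) \<le> real x * (\<Sum>p | prime p \<and> p \<le> x. 1 / real p)"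
  unfolding sum_distrib_left by (intro sum_mono) (simp add: of_nat_div_le_of_nat)

lemma sum_card_prime_factors_le:
  "real (\<Sum>n=1..x. card (prime_factors n)) \<le> real x * (\<Sum>p | prime p \<and> p \<le> x. 1 / real p)"
  using sum_primes_div_le[of x] by (simp only: sum_card_prime_factors of_nat_sum)

lemma multiplicity_le_self:
  assumes "prime p"
  shows "multiplicity p n \<le> (n::nat)"
proof (cases "n = 0")
  case False
  have "multiplicity p n < 2 ^ multiplicity p n" by (rule less_exp)
  also have "\<dots> \<le> p ^ multiplicity p n"
    using prime_ge_2_nat[OF assms] by (intro power_mono) auto
  also have "\<dots> \<le> n"
    using False by (intro dvd_imp_le multiplicity_dvd) auto
  finally show ?thesis by simp
qed simp

lemma multiplicity_eq_card_prime_powers_dvd: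
  assumes "(n::nat) \<in> {1..x}" "prime p"
  shows "multiplicity p n = card {k\<in>{1..x}. p ^ k dvd n}"
proof -
  have "p ^ k dvd n \<longleftrightarrow> k \<le> multiplicity p n" for k
    using assms by (intro power_dvd_iff_le_multiplicity) auto
  then have "{k\<in>{1..x}. p ^ k dvd n} = {k\<in>{1..x}. k \<le> multiplicity p n}" by blast
  also have "\<dots> = {1..multiplicity p n}"
    using multiplicity_le_self[OF assms(2), of n] assms(1) by auto
  finally show ?thesis by simp
qed

lemma sum_inverse_powers_le:
  assumes "(p::nat) \<ge> 2"
  shows "(\<Sum>k=1..K. 1 / real p ^ k) \<le> 2 / real p"
proof -
  have "(\<Sum>k=1..K. 1 / real p ^ k) \<le> 2 / real p - 2 / (real p * 2 ^ K)"
  proof (induction K)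
    case (Suc K)
    have "1 / real p ^ Suc K \<le> 1 / (real p * 2 ^ K)"
      using power_mono[of 2 "real p" K] assms by (intro divide_left_mono) (auto simp: mult_left_mono)
    also have "\<dots> = 2 / (real p * 2 ^ K) - 2 / (real p * 2 ^ Suc K)" by (simp add: field_simps)
    finally have "1 / real p ^ Suc K \<le> 2 / (real p * 2 ^ K) - 2 / (real p * 2 ^ Suc K)" .
    moreover have "(\<Sum>k=1..Suc K. 1 / real p ^ k) = (\<Sum>k=1..K. 1 / real p ^ k) + 1 / real p ^ Suc K"
      by simp
    ultimately show ?case using Suc.IH by linarith
  qed simp
  also have "\<dots> \<le> 2 / real p" by simp
  finally show ?thesis .
qed

text \<open>Legendre: the multiplicities of \<open>p\<close> in \<open>1, \<dots>, x\<close> add up to \<open>\<Sum>\<^sub>k x div p\<^sup>k\<close>.\<close>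

lemma sum_multiplicity_le:
  assumes "prime p"
  shows "real (\<Sum>n=1..x. multiplicity p n) \<le> 2 * real x / real p"
proof -
  have "(\<Sum>n=1..x. multiplicity p n) = (\<Sum>n\<in>{1..x}. \<Sum>k\<in>{1..x}. if p ^ k dvd n then 1 else 0)"
  proof (intro sum.cong refl)
    fix n assume "n \<in> {1..x}"
    from multiplicity_eq_card_prime_powers_dvd[OF this assms]
    show "multiplicity p n = (\<Sum>k\<in>{1..x}. if p ^ k dvd n then 1 else 0)"
      by (simp add: sum.inter_filter[symmetric])
  qed
  also have "\<dots> = (\<Sum>k\<in>{1..x}. \<Sum>n\<in>{1..x}. if p ^ k dvd n then 1 else 0)"
    by (rule sum.swap)
  also have "\<dots> = (\<Sum>k\<in>{1..x}. x div p ^ k)"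
    using assms card_multiples_atLeastAtMost[of "p ^ _" x]
    by (intro sum.cong refl) (simp add: prime_gt_0_nat sum.inter_filter[symmetric])
  finally have "real (\<Sum>n=1..x. multiplicity p n) = (\<Sum>k\<in>{1..x}. real (x div p ^ k))" by simp
  also have "\<dots> \<le> (\<Sum>k\<in>{1..x}. real x * (1 / real p ^ k))"
    using of_nat_div_le_of_nat[of x "p ^ _"] by (intro sum_mono) simp
  also have "\<dots> = real x * (\<Sum>k\<in>{1..x}. 1 / real p ^ k)" by (simp add: sum_distrib_left)
  also have "\<dots> \<le> real x * (2 / real p)"
    using prime_ge_2_nat[OF assms] by (intro mult_left_mono sum_inverse_powers_le) auto
  also have "\<dots> = 2 * real x / real p" by simp
  finally show ?thesis .
qed

lemma size_prime_factorization_eq_sum_multiplicity: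
  "size (prime_factorization (n::nat)) = (\<Sum>p\<in>prime_factors n. multiplicity p n)"
  by (simp add: size_multiset_overloaded_eq count_prime_factorization_prime in_prime_factors_imp_prime)

lemma sum_size_prime_factorization_le:
  "real (\<Sum>n=1..x. size (prime_factorization n)) \<le> 2 * real x * (\<Sum>p | prime p \<and> p \<le> x. 1 / real p)"
proof -
  have "(\<Sum>n=1..x. size (prime_factorization n)) = (\<Sum>n=1..x. \<Sum>p | prime p \<and> p \<le> x. multiplicity p n)"
  proof (intro sum.cong refl)
    fix n assume n: "n \<in> {1..x}"
    show "size (prime_factorization n) = (\<Sum>p | prime p \<and> p \<le> x. multiplicity p n)"
      unfolding size_prime_factorization_eq_sum_multiplicity
      by (intro sum.mono_neutral_left)
        (auto simp: prime_factors_eq_primes_le_dvd[OF n] not_dvd_imp_multiplicity_0)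
  qed
  also have "\<dots> = (\<Sum>p | prime p \<and> p \<le> x. \<Sum>n=1..x. multiplicity p n)" by (rule sum.swap)
  finally have "real (\<Sum>n=1..x. size (prime_factorization n))
      = (\<Sum>p | prime p \<and> p \<le> x. real (\<Sum>n=1..x. multiplicity p n))" by simp
  also have "\<dots> \<le> (\<Sum>p | prime p \<and> p \<le> x. 2 * real x * (1 / real p))"
    using sum_multiplicity_le by (intro sum_mono) auto
  also have "\<dots> = 2 * real x * (\<Sum>p | prime p \<and> p \<le> x. 1 / real p)" by (simp add: sum_distrib_left)
  finally show ?thesis .
qed

lemma less_two_pow_bitlen: "n < 2 ^ bitlen n"
  unfolding bitlen_def by (rule LeastI[of _ n]) (rule less_exp)

lemma two_pow_bitlen_le:
  assumes "n \<ge> 1"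
  shows "2 ^ (bitlen n - 1) \<le> n"
proof (rule ccontr)
  assume "\<not> 2 ^ (bitlen n - 1) \<le> n"
  then have "bitlen n \<le> bitlen n - 1" unfolding bitlen_def by (intro Least_le) simp
  moreover have "bitlen n \<noteq> 0" using less_two_pow_bitlen[of n] assms by (intro notI) simp
  ultimately show False by simp
qed

lemma bitlen_ge_2:
  assumes "n \<ge> 3"
  shows "bitlen n \<ge> 2"
proof (rule ccontr)
  assume "\<not> bitlen n \<ge> 2"
  then have "(2::nat) ^ bitlen n \<le> 2 ^ 1" by (intro power_increasing) auto
  then show False using less_two_pow_bitlen[of n] assms by simp
qed

lemma ln_bitlen_le:
  assumes "n \<ge> 3"
  shows "ln (real (bitlen n)) \<le> ln 3 + ln (ln (real n))"
proof -
  define k where "k = bitlen n"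
  have "k \<ge> 2" using bitlen_ge_2[OF assms] by (simp add: k_def)
  have "(2::real) ^ (k - 1) \<le> real n"
    using two_pow_bitlen_le[of n] assms unfolding k_def by (simp flip: of_nat_le_iff)
  then have "real (k - 1) * ln 2 \<le> ln (real n)"
    using ln_mono[of "2 ^ (k - 1)" "real n"] by (simp add: ln_realpow)
  moreover have "real k * ln 2 \<le> 2 * real (k - 1) * ln 2"
    using \<open>k \<ge> 2\<close> by (intro mult_right_mono) auto
  ultimately have "real k * ln 2 \<le> 2 * ln (real n)" by linarith
  moreover have "real k * (2 / 3) \<le> real k * ln 2"
    using ln2_ge_two_thirds by (intro mult_left_mono) auto
  ultimately have "real k \<le> 3 * ln (real n)" by linarith
  then have "ln (real k) \<le> ln (3 * ln (real n))" using \<open>k \<ge> 2\<close> by (intro ln_mono) auto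
  also have "\<dots> = ln 3 + ln (ln (real n))" using assms by (simp add: ln_mult)
  finally show ?thesis unfolding k_def .
qed

lemma ln_ln_3_pos: "0 < ln (ln (3::real))"
proof -
  have "exp 1 < (3::real)" using e_less_272 by simp
  then have "ln (exp 1) < ln (3::real)" by (subst ln_less_cancel_iff) auto
  then show ?thesis by simp
qed

lemma ln_ln_pos:
  assumes "n \<ge> 3"
  shows "0 < ln (ln (real n))"
proof -
  have "ln (ln 3) \<le> ln (ln (real n))" using assms by simp
  with ln_ln_3_pos show ?thesis by linarith
qed

lemma le_mult_ln_ln:
  assumes "0 \<le> a" "n \<ge> 3"
  shows "a \<le> a / ln (ln 3) * ln (ln (real n))"
proof -
  have "ln (ln 3) \<le> ln (ln (real n))" using assms(2) by simp
  then have "a * ln (ln 3) \<le> a * ln (ln (real n))" using assms(1) by (rule mult_left_mono)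
  then show ?thesis using ln_ln_3_pos by (simp add: field_simps)
qed

lemma sum_primes_inverse_le_ln_ln:
  "\<exists>K. \<forall>x\<ge>3. (\<Sum>p | prime p \<and> p \<le> x. 1 / real p) \<le> K * ln (ln (real x))"
proof (intro exI allI impI)
  fix x :: nat assume "x \<ge> 3"
  have "ln (ln (2::real)) < 0" using ln_2_less_1 by simp
  then have "0 \<le> 2 - 2 * ln (ln (2::real))" by linarith
  from le_mult_ln_ln[OF this \<open>x \<ge> 3\<close>] sum_primes_inverse_le[of x] \<open>x \<ge> 3\<close>
  show "(\<Sum>p | prime p \<and> p \<le> x. 1 / real p)
      \<le> ((2 - 2 * ln (ln 2)) / ln (ln 3) + 2) * ln (ln (real x))"
    unfolding distrib_right by linarith
qed

lemma ln_bitlen_le_ln_ln: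
  "\<exists>K. \<forall>x\<ge>3. ln (real (bitlen x)) \<le> K * ln (ln (real x))"
proof (intro exI allI impI)
  fix x :: nat assume "x \<ge> 3"
  from le_mult_ln_ln[of "ln 3", OF _ this] ln_bitlen_le[OF this]
  have "ln (real (bitlen x)) \<le> ln 3 / ln (ln 3) * ln (ln (real x)) + ln (ln (real x))"
    by simp
  then show "ln (real (bitlen x)) \<le> (ln 3 / ln (ln 3) + 1) * ln (ln (real x))"
    by (simp add: distrib_right)
qed

lemma sum_list_map_concat: "sum_list (map f (concat xss)) = (\<Sum>xs\<leftarrow>xss. sum_list (map f xs))"
  by (induction xss) auto

lemma sum_upto_primes_eq:
  fixes f :: "nat \<Rightarrow> 'a::comm_monoid_add"
  shows "(\<Sum>p=2..x. if prime p then f p else 0) = (\<Sum>p | prime p \<and> p \<le> x. f p)"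
proof -
  have "{p\<in>{2..x}. prime p} = {p. prime p \<and> p \<le> x}" using prime_ge_2_nat by auto
  then show ?thesis by (simp flip: sum.inter_filter)
qed

lemma trace_cost_sieve_trace:
  "trace_cost (\<lambda>_. c) (\<lambda>_. c) (\<lambda>_. c) (\<lambda>_. g) (sieve_trace x)
     = c * (real x + real (x - 1) + 2 * (\<Sum>p | prime p \<and> p \<le> x. real (x div p)))"
proof -
  have "trace_cost (\<lambda>_. c) (\<lambda>_. c) (\<lambda>_. c) (\<lambda>_. g) (sieve_trace x)
      = real x * c + (\<Sum>p=2..x. c + (if prime p then 2 * real (x div p) * c else 0))"
    by (simp add: trace_cost_def sieve_trace_def Let_def sum_list_map_concat sum_list_replicate
        sum_list_triv interv_sum_list_conv_sum_set_nat atLeastLessThanSuc_atLeastAtMost o_def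
        del: upt_Suc)
      (intro sum.cong refl; simp add: sum_list_map_concat sum_list_triv)
  also have "\<dots> = c * (real x + real (x - 1) + 2 * (\<Sum>p | prime p \<and> p \<le> x. real (x div p)))"
    by (simp add: sum.distrib sum_upto_primes_eq[of "\<lambda>p. 2 * real (x div p) * c"] sum_distrib_left
        sum_distrib_right algebra_simps)
  finally show ?thesis .
qed

lemma trace_cost_factor_trace:
  "trace_cost (\<lambda>_. c) (\<lambda>_. c) (\<lambda>_. c) (\<lambda>_. g) (factor_trace x n)
     = 2 * c * real (size (prime_factorization n))"
  by (simp add: trace_cost_def factor_trace_def Let_def sum_list_map_concat sum_list_replicate)

lemma trace_cost_mark_trace:
  "trace_cost (\<lambda>_. c) (\<lambda>_. c) (\<lambda>_. c) (\<lambda>_. g) (mark_trace x n)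
     = c * (2 + 4 * real (card (prime_factors n))) + g"
  by (simp add: trace_cost_def mark_trace_def Let_def sum_list_map_concat sum_list_triv algebra_simps)

lemma trace_cost_append:
  "trace_cost M A D G (xs @ ys) = trace_cost M A D G xs + trace_cost M A D G ys"
  by (simp add: trace_cost_def)

lemma trace_cost_concat_map:
  "trace_cost M A D G (concat (map f xs)) = (\<Sum>x\<leftarrow>xs. trace_cost M A D G (f x))"
  by (induction xs) (simp_all add: trace_cost_def)

lemma trace_cost_mono:
  assumes "\<And>q. q \<in> set tr \<Longrightarrow> prim_cost M A D G q \<le> prim_cost M' A' D' G' q"
  shows "trace_cost M A D G tr \<le> trace_cost M' A' D' G' tr"
  using assms unfolding trace_cost_def by (simp add: sum_list_mono)

lemma set_alg_trace:
  "set (alg_trace x) \<subseteq> {Arith (bitlen x), Mult (bitlen x), Divi (bitlen x), Gcdop (bitlen x)}"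
  by (auto simp: alg_trace_def sieve_trace_def factor_trace_def mark_trace_def Let_def
      simp del: upt_Suc split: if_splits)

lemma trace_cost_alg_trace_const:
  "trace_cost (\<lambda>_. c) (\<lambda>_. c) (\<lambda>_. c) (\<lambda>_. g) (alg_trace x)
     = c * (real x + real (x - 1) + 2 * (\<Sum>p | prime p \<and> p \<le> x. real (x div p)))
       + 2 * c * real (\<Sum>n=1..x. size (prime_factorization n))
       + c * (2 * real x + 4 * real (\<Sum>n=1..x. card (prime_factors n))) + g * real x"
  by (simp add: alg_trace_def trace_cost_append trace_cost_concat_map trace_cost_sieve_trace
      trace_cost_factor_trace trace_cost_mark_trace interv_sum_list_conv_sum_set_nat
      atLeastLessThanSuc_atLeastAtMost sum.distrib sum_distrib_left algebra_simps del: upt_Suc)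

lemma trace_cost_alg_trace_le:
  assumes "A (bitlen x) \<le> c" "M (bitlen x) \<le> c" "D (bitlen x) \<le> c" "G (bitlen x) \<le> g" "0 \<le> c"
  shows "trace_cost M A D G (alg_trace x)
    \<le> c * real x * (4 + 10 * (\<Sum>p | prime p \<and> p \<le> x. 1 / real p)) + g * real x"
proof -
  define T where "T = (\<Sum>p | prime p \<and> p \<le> x. 1 / real p)"
  have "trace_cost M A D G (alg_trace x) \<le> trace_cost (\<lambda>_. c) (\<lambda>_. c) (\<lambda>_. c) (\<lambda>_. g) (alg_trace x)"
    using assms by (intro trace_cost_mono) (auto dest!: subsetD[OF set_alg_trace])
  also have "\<dots> \<le> c * (real x + real x + 2 * (real x * T)) + 2 * c * (2 * real x * T)
       + c * (2 * real x + 4 * (real x * T)) + g * real x"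
    unfolding trace_cost_alg_trace_const T_def
    using sum_primes_div_le[of x] sum_size_prime_factorization_le[of x] sum_card_prime_factors_le[of x]
      assms(5)
    by (intro add_mono order.refl mult_left_mono) auto
  also have "\<dots> = c * real x * (4 + 10 * T) + g * real x" by (simp add: algebra_simps)
  finally show ?thesis unfolding T_def .
qed

lemma length_stored_ints:
  "length (stored_ints x) = 2 * x + 2 * (\<Sum>n=1..x. card (prime_factors n))"
proof -
  have "length (concat (map (\<lambda>p. [p, multiplicity p n]) (sorted_list_of_set (prime_factors n))))
      = 2 * card (prime_factors n)" for n
    by (simp add: length_concat o_def sum_list_triv)
  then show ?thesis
    by (simp add: stored_ints_def length_concat o_def interv_sum_list_conv_sum_set_nat
        atLeastLessThanSuc_atLeastAtMost sum_distrib_left del: upt_Suc)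
qed

lemma spf_le: "spf n \<le> n"
proof (cases "n \<le> 1")
  case False
  then have "prime_factors n \<noteq> {}" by (simp add: prime_factorization_empty_iff)
  then have "Min (prime_factors n) \<in> prime_factors n" by (intro Min_in) auto
  then show ?thesis using False unfolding spf_def by (auto intro: dvd_imp_le)
qed (simp add: spf_def)

lemma stored_ints_le:
  assumes "v \<in> set (stored_ints x)"
  shows "v \<le> x"
proof -
  consider (sieve) n where "n \<in> {1..x}" "v = spf n"
    | (factorization) n p where "n \<in> {1..x}" "p \<in> prime_factors n" "v = p \<or> v = multiplicity p n"
    | (mark) n where "n \<in> {1..x}" "v = mark n"
    using assms unfolding stored_ints_def by (auto simp del: upt_Suc simp: less_Suc_eq_le)
  then show ?thesis
  proof cases
    case sieve
    then show ?thesis using spf_le[of n] by auto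
  next
    case factorization
    then have "p \<le> n" "multiplicity p n \<le> n"
      by (auto intro: dvd_imp_le multiplicity_le_self)
    then show ?thesis using factorization by auto
  next
    case mark
    then show ?thesis by (auto simp: mark_def)
  qed
qed

lemma length_stored_ints_le_ln_ln:
  "\<exists>C. \<forall>x\<ge>3. real (length (stored_ints x)) \<le> C * real x * ln (ln (real x))"
proof -
  obtain K where K: "\<forall>x\<ge>3. (\<Sum>p | prime p \<and> p \<le> x. 1 / real p) \<le> K * ln (ln (real x))"
    using sum_primes_inverse_le_ln_ln by blast
  show ?thesis
  proof (intro exI allI impI)
    fix x :: nat assume "x \<ge> 3"
    have "real (length (stored_ints x)) \<le> 2 * real x * 1 + 2 * real x * (\<Sum>p | prime p \<and> p \<le> x. 1 / real p)"
      using sum_card_prime_factors_le[of x] by (simp add: length_stored_ints)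
    also have "\<dots> \<le> 2 * real x * (1 / ln (ln 3) * ln (ln (real x))) + 2 * real x * (K * ln (ln (real x)))"
      using le_mult_ln_ln[of 1 x] K \<open>x \<ge> 3\<close> by (intro add_mono mult_left_mono) auto
    also have "\<dots> = (2 / ln (ln 3) + 2 * K) * real x * ln (ln (real x))" by (simp add: algebra_simps)
    finally show "real (length (stored_ints x)) \<le> (2 / ln (ln 3) + 2 * K) * real x * ln (ln (real x))" .
  qed
qed

lemma prim_costs_le_uniform:
  fixes M A D G :: "nat \<Rightarrow> real"
  assumes "\<forall>k\<ge>1. real k \<le> M k"
    and "\<exists>Ca. \<forall>k\<ge>1. A k \<le> Ca * real k"
    and "\<exists>Cd. \<forall>k\<ge>1. D k \<le> Cd * M k"
    and "\<exists>Cg. \<forall>k\<ge>2. G k \<le> Cg * M k * ln (real k)"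
  shows "\<exists>c g. 0 \<le> c \<and> 0 \<le> g \<and> (\<forall>k\<ge>2. A k \<le> c * M k \<and> M k \<le> c * M k \<and> D k \<le> c * M k
              \<and> G k \<le> g * M k * ln (real k))"
proof -
  obtain Ca Cd Cg where Ca: "\<forall>k\<ge>1. A k \<le> Ca * real k" and Cd: "\<forall>k\<ge>1. D k \<le> Cd * M k"
    and Cg: "\<forall>k\<ge>2. G k \<le> Cg * M k * ln (real k)"
    using assms(2-4) by blast
  define c where "c = max Ca 0 + max Cd 0 + 1"
  have "A k \<le> c * M k \<and> M k \<le> c * M k \<and> D k \<le> c * M k \<and> G k \<le> max Cg 0 * M k * ln (real k)"
    if "k \<ge> 2" for k
  proof (intro conjI)
    have "0 \<le> M k" "real k \<le> M k" using assms(1) that by (auto intro: order_trans[of _ "real k"])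
    have c: "1 \<le> c" "max Ca 0 \<le> c" "max Cd 0 \<le> c" by (simp_all add: c_def)
    have "A k \<le> Ca * real k" using Ca that by simp
    also have "\<dots> \<le> max Ca 0 * real k" by (intro mult_right_mono) auto
    also have "\<dots> \<le> c * M k" using c \<open>real k \<le> M k\<close> by (intro mult_mono) auto
    finally show "A k \<le> c * M k" .
    show "M k \<le> c * M k" using c mult_right_mono[of 1 c "M k"] \<open>0 \<le> M k\<close> by simp
    have "D k \<le> Cd * M k" using Cd that by simp
    also have "\<dots> \<le> max Cd 0 * M k" using \<open>0 \<le> M k\<close> by (intro mult_right_mono) auto
    also have "\<dots> \<le> c * M k" using c \<open>0 \<le> M k\<close> by (intro mult_right_mono) auto
    finally show "D k \<le> c * M k" .
    have "G k \<le> Cg * (M k * ln (real k))" using Cg that by (simp add: mult.assoc)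
    also have "\<dots> \<le> max Cg 0 * (M k * ln (real k))"
      using \<open>0 \<le> M k\<close> that by (intro mult_right_mono) auto
    finally show "G k \<le> max Cg 0 * M k * ln (real k)" by (simp add: mult.assoc)
  qed
  then show ?thesis by (intro exI[of _ c] exI[of _ "max Cg 0"]) (auto simp: c_def)
qed

lemma trace_cost_alg_trace_le_ln_ln:
  fixes M A D G :: "nat \<Rightarrow> real"
  assumes M_lin: "\<forall>k\<ge>1. real k \<le> M k"
    and "\<exists>c g. 0 \<le> c \<and> 0 \<le> g \<and> (\<forall>k\<ge>2. A k \<le> c * M k \<and> M k \<le> c * M k \<and> D k \<le> c * M k
              \<and> G k \<le> g * M k * ln (real k))"
  shows "\<exists>C. \<forall>x\<ge>3. trace_cost M A D G (alg_trace x) \<le> C * real x * M (bitlen x) * ln (ln (real x))"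
proof -
  obtain c g where "0 \<le> c" "0 \<le> g" and costs: "\<forall>k\<ge>2. A k \<le> c * M k \<and> M k \<le> c * M k
      \<and> D k \<le> c * M k \<and> G k \<le> g * M k * ln (real k)"
    using assms(2) by blast
  obtain KT where KT: "\<forall>x\<ge>3. (\<Sum>p | prime p \<and> p \<le> x. 1 / real p) \<le> KT * ln (ln (real x))"
    using sum_primes_inverse_le_ln_ln by blast
  obtain KL where KL: "\<forall>x\<ge>3. ln (real (bitlen x)) \<le> KL * ln (ln (real x))"
    using ln_bitlen_le_ln_ln by blast
  show ?thesis
  proof (intro exI allI impI)
    fix x :: nat assume "x \<ge> 3"
    define k where "k = bitlen x"
    define LL where "LL = ln (ln (real x))"
    have "k \<ge> 2" using bitlen_ge_2[OF \<open>x \<ge> 3\<close>] by (simp add: k_def)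
    then have "0 \<le> M k" using M_lin by (auto intro: order_trans[of _ "real k"])
    define T where "T = (\<Sum>p | prime p \<and> p \<le> x. 1 / real p)"
    have "4 \<le> 4 / ln (ln 3) * LL" "T \<le> KT * LL"
      using le_mult_ln_ln[of 4 x] KT \<open>x \<ge> 3\<close> by (simp_all add: LL_def T_def)
    then have T_le: "4 + 10 * T \<le> (4 / ln (ln 3) + 10 * KT) * LL" by (simp add: distrib_right)
    have k_le: "ln (real k) \<le> KL * LL" using KL \<open>x \<ge> 3\<close> by (simp add: k_def LL_def)
    have "trace_cost M A D G (alg_trace x) \<le> (c * M k) * real x * (4 + 10 * T) + (g * M k * ln (real k)) * real x"
      unfolding k_def T_def
      using costs \<open>k \<ge> 2\<close> \<open>0 \<le> c\<close> \<open>0 \<le> M k\<close> unfolding k_def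
      by (intro trace_cost_alg_trace_le) auto
    also have "\<dots> = (c * M k * real x) * (4 + 10 * T) + (g * M k * real x) * ln (real k)"
      by (simp add: mult_ac)
    also have "\<dots> \<le> (c * M k * real x) * ((4 / ln (ln 3) + 10 * KT) * LL) + (g * M k * real x) * (KL * LL)"
      using T_le k_le \<open>0 \<le> c\<close> \<open>0 \<le> g\<close> \<open>0 \<le> M k\<close> by (intro add_mono mult_left_mono) auto
    also have "\<dots> = (c * (4 / ln (ln 3) + 10 * KT) + g * KL) * real x * M (bitlen x) * ln (ln (real x))"
      by (simp add: k_def LL_def algebra_simps)
    finally show "trace_cost M A D G (alg_trace x)
        \<le> (c * (4 / ln (ln 3) + 10 * KT) + g * KL) * real x * M (bitlen x) * ln (ln (real x))" .
  qed
qed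

theorem theorem6p1:
  fixes M A D G :: "nat \<Rightarrow> real"
  assumes M_lin: "\<forall>k\<ge>1. real k \<le> M k"
    and A_lin: "\<exists>Ca. \<forall>k\<ge>1. A k \<le> Ca * real k"
    and D_mult: "\<exists>Cd. \<forall>k\<ge>1. D k \<le> Cd * M k"
    and G_gcd: "\<exists>Cg. \<forall>k\<ge>2. G k \<le> Cg * M k * ln (real k)"
  shows "\<exists>C. \<forall>x::nat. x \<ge> 3 \<longrightarrow>
           real (length (stored_ints x)) \<le> C * real x * ln (ln (real x))
         \<and> (\<forall>v\<in>set (stored_ints x). v \<le> x)
         \<and> trace_cost M A D G (alg_trace x) \<le> C * real x * M (bitlen x) * ln (ln (real x))"
proof -
  obtain C1 where C1: "\<forall>x\<ge>3. real (length (stored_ints x)) \<le> C1 * real x * ln (ln (real x))"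
    using length_stored_ints_le_ln_ln by blast
  obtain C2 where C2: "\<forall>x\<ge>3. trace_cost M A D G (alg_trace x) \<le> C2 * real x * M (bitlen x) * ln (ln (real x))"
    using trace_cost_alg_trace_le_ln_ln[OF M_lin prim_costs_le_uniform[OF assms]] by blast
  show ?thesis
  proof (intro exI[of _ "max C1 C2"] allI impI conjI ballI)
    fix x :: nat assume "x \<ge> 3"
    define LL where "LL = ln (ln (real x))"
    have "0 \<le> LL" using ln_ln_pos[OF \<open>x \<ge> 3\<close>] by (simp add: LL_def)
    have "0 \<le> M (bitlen x)"
      using M_lin bitlen_ge_2[OF \<open>x \<ge> 3\<close>] by (auto intro: order_trans[of _ "real (bitlen x)"])
    have "real (length (stored_ints x)) \<le> C1 * (real x * LL)"
      using C1 \<open>x \<ge> 3\<close> by (simp add: LL_def mult.assoc)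
    also have "\<dots> \<le> max C1 C2 * (real x * LL)" using \<open>0 \<le> LL\<close> by (intro mult_right_mono) auto
    finally show "real (length (stored_ints x)) \<le> max C1 C2 * real x * ln (ln (real x))"
      by (simp add: LL_def mult.assoc)
    have "trace_cost M A D G (alg_trace x) \<le> C2 * (real x * M (bitlen x) * LL)"
      using C2 \<open>x \<ge> 3\<close> by (simp add: LL_def mult.assoc)
    also have "\<dots> \<le> max C1 C2 * (real x * M (bitlen x) * LL)"
      using \<open>0 \<le> LL\<close> \<open>0 \<le> M (bitlen x)\<close> by (intro mult_right_mono) auto
    finally show "trace_cost M A D G (alg_trace x) \<le> max C1 C2 * real x * M (bitlen x) * ln (ln (real x))"
      by (simp add: LL_def mult.assoc)
  next
    fix x v assume "v \<in> set (stored_ints x)"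
    then show "v \<le> x" by (rule stored_ints_le)
  qed
qed

end
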